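(* In the modified market (with virtual buyers) described in the context, let $x^*\in\mathbb R^N_+$ be defined recursively, processing buyers in decreasing order of valuation with ties broken by index, by $$x^*_i=\min\Bigl(\frac{B_i}{v_i},\ \min_{H\subseteq H_i}\{f(E_{H\cup\{i\}})-x^*(H)\}\Bigr)\qquad(i\in N).$$ Then $x^*$ is an optimal allocation for liquid welfare: there is $w^*\in P$ with $w^*(E_i)=x^*_i$ for all $i\in N$, and $\sum_{i\in N}\min(v_ix^*_i,B_i)=\max_{w\in P}\sum_{i\in N}\min(v_iw(E_i),B_i)$. Moreover $x^*(N)=f(E_N)$.
   Context: Market model. Buyers $N_0=\{1,\dots,n\}$, sellers $M=\{1,\dots,m\}$, bipartite edge set $E_0\subseteq N_0\times M$; edge $(i,j)$ written $ij$; for a set $S$ of participants $E_S$ is the set of edges incident to a member of $S$; for a vector $w$ and a set $F$, $w(F)=\sum_{e\in F}w_e$. Each seller $j$ has a monotone submodular $f_j:2^{E_j}\to\mathbb R_+$ with $f_j(\emptyset)=0$ ($f_j(E_j)$ is her total amount of a homogeneous divisible good). Buyer $i$ has per-unit valuation $v_i>0$ and budget $B_i\ge0$; seller $j$ has per-unit valuation $\rho_j>0$. Modified market. For each seller $j$ add a virtual buyer $n+j$ adjacent only to $j$, with $v_{n+j}=\rho_j$ and $B_{n+j}=\infty$ (so $B_{n+j}/v_{n+j}=\infty$). Let $N=\{1,\dots,n+m\}$, $E=E_0\cup\{(n+j)j:j\in M\}$, and extend $f_j$ to subsets $F$ of $E_j$ (now including the edge $(n+j)j$) by $f_j(F)=f_j(E_j)$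 if $(n+j)j\in F$ and $f_j(F)$ unchanged otherwise. Let $P=\{w\in\mathbb R^E_+: w|_{E_j}\in P_j\ \forall j\}$ where $P_j=\{y\in\mathbb R^{E_j}_+: y(F)\le f_j(F)\ \forall F\subseteq E_j\}$, and $f(S)=\sum_{j\in M}f_j(S\cap E_j)$ for $S\subseteq E$. For $i\in N$, $H_i$ is the set of buyers $k\in N$ with $v_k>v_i$, or with $v_k=v_i$ and $k<i$. *)

theory Defs
  imports Complex_Main
begin

text \<open>Buyers and sellers are natural numbers; an edge is a pair (buyer, seller).
  Original buyers are 1..n, sellers 1..m, virtual buyer of seller j is n+j.\<close>

definition Emod :: "nat \<Rightarrow> nat \<Rightarrow> (nat \<times> nat) set \<Rightarrow> (nat \<times> nat) set" where
  "Emod n m E0 = E0 \<union> (\<lambda>j. (n + j, j)) ` {1..m}"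

definition sellerE :: "(nat \<times> nat) set \<Rightarrow> nat \<Rightarrow> (nat \<times> nat) set" where
  "sellerE E j = {e \<in> E. snd e = j}"

definition buyerE :: "(nat \<times> nat) set \<Rightarrow> nat set \<Rightarrow> (nat \<times> nat) set" where
  "buyerE E S = {e \<in> E. fst e \<in> S}"

definition fext :: "nat \<Rightarrow> (nat \<times> nat) set \<Rightarrow> (nat \<Rightarrow> (nat \<times> nat) set \<Rightarrow> real)
    \<Rightarrow> nat \<Rightarrow> (nat \<times> nat) set \<Rightarrow> real" where
  "fext n E0 fs j F = (if (n + j, j) \<in> F then fs j (sellerE E0 j) else fs j F)"

definition fmod :: "nat \<Rightarrow> nat \<Rightarrow> (nat \<times> nat) set \<Rightarrow> (nat \<Rightarrow> (nat \<times> nat) set \<Rightarrow> real)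
    \<Rightarrow> (nat \<times> nat) set \<Rightarrow> real" where
  "fmod n m E0 fs S = (\<Sum>j\<in>{1..m}. fext n E0 fs j (S \<inter> sellerE (Emod n m E0) j))"

text \<open>The polytope P (vectors indexed by E; values off E are irrelevant).\<close>
definition Pmod :: "nat \<Rightarrow> nat \<Rightarrow> (nat \<times> nat) set \<Rightarrow> (nat \<Rightarrow> (nat \<times> nat) set \<Rightarrow> real)
    \<Rightarrow> ((nat \<times> nat) \<Rightarrow> real) set" where
  "Pmod n m E0 fs = {w. (\<forall>e\<in>Emod n m E0. 0 \<le> w e) \<and>
      (\<forall>j\<in>{1..m}. \<forall>F. F \<subseteq> sellerE (Emod n m E0) j \<longrightarrow> sum w F \<le> fext n E0 fs j F)}"

definition vmod :: "nat \<Rightarrow> (nat \<Rightarrow> real) \<Rightarrow> (nat \<Rightarrow> real) \<Rightarrow> nat \<Rightarrow> real" where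
  "vmod n v \<rho> i = (if i \<le> n then v i else \<rho> (i - n))"

definition Hset :: "nat \<Rightarrow> nat \<Rightarrow> (nat \<Rightarrow> real) \<Rightarrow> (nat \<Rightarrow> real) \<Rightarrow> nat \<Rightarrow> nat set" where
  "Hset n m v \<rho> i = {k \<in> {1..n+m}. vmod n v \<rho> k > vmod n v \<rho> i \<or>
      (vmod n v \<rho> k = vmod n v \<rho> i \<and> k < i)}"

text \<open>min(v_i t, B_i); for virtual buyers B = \<infinity>, so the term is just v_i t.\<close>
definition lw_term :: "nat \<Rightarrow> (nat \<Rightarrow> real) \<Rightarrow> (nat \<Rightarrow> real) \<Rightarrow> (nat \<Rightarrow> real) \<Rightarrow> nat \<Rightarrow> real \<Rightarrow> real" where
  "lw_term n v \<rho> B i t = (if i \<le> n then min (v i * t) (B i) else \<rho> (i - n) * t)"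

text \<open>The recursive right-hand side defining x^*_i; for virtual buyers B_i/v_i = \<infinity>.\<close>
definition xrhs :: "nat \<Rightarrow> nat \<Rightarrow> (nat \<times> nat) set \<Rightarrow> (nat \<Rightarrow> (nat \<times> nat) set \<Rightarrow> real)
    \<Rightarrow> (nat \<Rightarrow> real) \<Rightarrow> (nat \<Rightarrow> real) \<Rightarrow> (nat \<Rightarrow> real) \<Rightarrow> (nat \<Rightarrow> real) \<Rightarrow> nat \<Rightarrow> real" where
  "xrhs n m E0 fs v \<rho> B x i =
     (let inner = Min ((\<lambda>H. fmod n m E0 fs (buyerE (Emod n m E0) (H \<union> {i})) - sum x H)
                        ` Pow (Hset n m v \<rho> i))
      in if i \<le> n then min (B i / v i) inner else inner)"

end

theory Submission
  imports Defs
begin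

text \<open>Buyers see the market through \<open>g(H) = f(E_H)\<close>, again a polymatroid rank function, and
  \<open>x*\<close> is the greedy vector of \<open>g\<close> in order of decreasing valuation, each buyer capped at
  \<open>B_i/v_i\<close>. Greedy gives \<open>x*(H) \<le> g(H)\<close>; by submodularity the tight sets are closed under
  union, so every initial segment \<open>S\<close> of the order contains a tight set whose complement in
  \<open>S\<close> consists of capped buyers. Hence any feasible allocation, truncated at the caps, gets at
  most \<open>x*(S)\<close> on every initial segment, and Abel summation against the decreasing valuations
  gives optimality. Virtual buyers are never capped, so the largest tight set contains all of
  them; since a virtual buyer saturates its seller, this gives \<open>x*(N) = g(N)\<close>. Finally, a
  vector in the polymatroid of \<open>g\<close> lifts to an edge vector in \<open>P\<close> with the prescribed buyer
  sums (the induced polymatroid theorem): by induction, two edges of the same buyer are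
  identified, and the weight of the merged edge is split back between them.\<close>

definition polymatroid_fun :: "'e set \<Rightarrow> ('e set \<Rightarrow> real) \<Rightarrow> bool" where
  "polymatroid_fun E f \<longleftrightarrow> f {} = 0 \<and> (\<forall>S T. S \<subseteq> T \<and> T \<subseteq> E \<longrightarrow> f S \<le> f T) \<and>
     (\<forall>S T. S \<subseteq> E \<and> T \<subseteq> E \<longrightarrow> f (S \<union> T) + f (S \<inter> T) \<le> f S + f T)"

definition polymatroid :: "'e set \<Rightarrow> ('e set \<Rightarrow> real) \<Rightarrow> ('e \<Rightarrow> real) set" where
  "polymatroid E f = {w. (\<forall>e\<in>E. 0 \<le> w e) \<and> (\<forall>F. F \<subseteq> E \<longrightarrow> sum w F \<le> f F)}"

lemma polymatroid_funI:
  assumes "f {} = 0" and "\<And>S T. S \<subseteq> T \<Longrightarrow> T \<subseteq> E \<Longrightarrow> f S \<le> f T"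
    and "\<And>S T. S \<subseteq> E \<Longrightarrow> T \<subseteq> E \<Longrightarrow> f (S \<union> T) + f (S \<inter> T) \<le> f S + f T"
  shows "polymatroid_fun E f"
  using assms unfolding polymatroid_fun_def by blast

lemma
  assumes "polymatroid_fun E f"
  shows polymatroid_fun_empty: "f {} = 0"
    and polymatroid_fun_mono: "S \<subseteq> T \<Longrightarrow> T \<subseteq> E \<Longrightarrow> f S \<le> f T"
    and polymatroid_fun_submodular:
      "S \<subseteq> E \<Longrightarrow> T \<subseteq> E \<Longrightarrow> f (S \<union> T) + f (S \<inter> T) \<le> f S + f T"
  using assms unfolding polymatroid_fun_def by blast+

lemma polymatroidI:
  "(\<And>e. e \<in> E \<Longrightarrow> 0 \<le> w e) \<Longrightarrow> (\<And>F. F \<subseteq> E \<Longrightarrow> sum w F \<le> f F) \<Longrightarrow> w \<in> polymatroid E f"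
  unfolding polymatroid_def by blast

lemma
  assumes "w \<in> polymatroid E f"
  shows polymatroid_nonneg: "e \<in> E \<Longrightarrow> 0 \<le> w e"
    and polymatroid_sum_le: "F \<subseteq> E \<Longrightarrow> sum w F \<le> f F"
  using assms unfolding polymatroid_def by blast+

lemma polymatroid_fun_subset:
  assumes "polymatroid_fun E f" "E' \<subseteq> E"
  shows "polymatroid_fun E' f"
proof (rule polymatroid_funI)
  show "f {} = 0"
    using polymatroid_fun_empty[OF assms(1)] .
  show "f S \<le> f T" if "S \<subseteq> T" "T \<subseteq> E'" for S T
    using that assms(2) by (intro polymatroid_fun_mono[OF assms(1)]) auto
  show "f (S \<union> T) + f (S \<inter> T) \<le> f S + f T" if "S \<subseteq> E'" "T \<subseteq> E'" for S T
    using that assms(2) by (intro polymatroid_fun_submodular[OF assms(1)]) auto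
qed

lemma polymatroid_fun_saturate:
  assumes f: "polymatroid_fun E f" and "e \<notin> E"
  shows "polymatroid_fun (insert e E) (\<lambda>F. if e \<in> F then f E else f F)"
proof (rule polymatroid_funI)
  show "(if e \<in> {} then f E else f {}) = 0"
    using polymatroid_fun_empty[OF f] by simp
  show "(if e \<in> S then f E else f S) \<le> (if e \<in> T then f E else f T)"
    if "S \<subseteq> T" "T \<subseteq> insert e E" for S T
    using that \<open>e \<notin> E\<close> by (auto intro: polymatroid_fun_mono[OF f])
  show "(if e \<in> S \<union> T then f E else f (S \<union> T)) + (if e \<in> S \<inter> T then f E else f (S \<inter> T))
      \<le> (if e \<in> S then f E else f S) + (if e \<in> T then f E else f T)"
    if "S \<subseteq> insert e E" "T \<subseteq> insert e E" for S T
    using that \<open>e \<notin> E\<close>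
    by (auto intro: polymatroid_fun_mono[OF f] polymatroid_fun_submodular[OF f])
qed

lemma polymatroid_fun_sum:
  assumes f: "\<And>j. j \<in> J \<Longrightarrow> polymatroid_fun (E j) (f j)"
  shows "polymatroid_fun UNIV (\<lambda>S. \<Sum>j\<in>J. f j (S \<inter> E j))"
proof (rule polymatroid_funI)
  show "(\<Sum>j\<in>J. f j ({} \<inter> E j)) = 0"
    by (intro sum.neutral) (simp add: polymatroid_fun_empty[OF f])
  show "(\<Sum>j\<in>J. f j (S \<inter> E j)) \<le> (\<Sum>j\<in>J. f j (T \<inter> E j))" if "S \<subseteq> T" for S T
    using that by (intro sum_mono polymatroid_fun_mono[OF f]) auto
  show "(\<Sum>j\<in>J. f j ((S \<union> T) \<inter> E j)) + (\<Sum>j\<in>J. f j (S \<inter> T \<inter> E j))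
      \<le> (\<Sum>j\<in>J. f j (S \<inter> E j)) + (\<Sum>j\<in>J. f j (T \<inter> E j))" for S T
  proof -
    have "\<And>j. (S \<union> T) \<inter> E j = S \<inter> E j \<union> T \<inter> E j" "\<And>j. S \<inter> T \<inter> E j = (S \<inter> E j) \<inter> (T \<inter> E j)"
      by blast+
    then show ?thesis
      unfolding sum.distrib[symmetric]
      by (simp only:) (intro sum_mono polymatroid_fun_submodular[OF f]; blast)
  qed
qed

lemma polymatroid_fun_preimage:
  assumes f: "polymatroid_fun E f"
  shows "polymatroid_fun UNIV (\<lambda>H. f {e \<in> E. p e \<in> H})"
proof (rule polymatroid_funI)
  show "f {e \<in> E. p e \<in> {}} = 0"
    using polymatroid_fun_empty[OF f] by simp
  show "f {e \<in> E. p e \<in> H} \<le> f {e \<in> E. p e \<in> K}" if "H \<subseteq> K" for H K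
    using that by (intro polymatroid_fun_mono[OF f]) auto
  show "f {e \<in> E. p e \<in> H \<union> K} + f {e \<in> E. p e \<in> H \<inter> K}
      \<le> f {e \<in> E. p e \<in> H} + f {e \<in> E. p e \<in> K}" for H K
  proof -
    have "{e \<in> E. p e \<in> H \<union> K} = {e \<in> E. p e \<in> H} \<union> {e \<in> E. p e \<in> K}"
      "{e \<in> E. p e \<in> H \<inter> K} = {e \<in> E. p e \<in> H} \<inter> {e \<in> E. p e \<in> K}"
      by blast+
    then show ?thesis
      by (simp only:) (intro polymatroid_fun_submodular[OF f]; blast)
  qed
qed

definition identify :: "'e \<Rightarrow> 'e \<Rightarrow> ('e set \<Rightarrow> real) \<Rightarrow> 'e set \<Rightarrow> real" where
  "identify a b f S = f (if a \<in> S then insert b S else S)"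

lemma polymatroid_fun_identify:
  assumes f: "polymatroid_fun E f" and "b \<in> E"
  shows "polymatroid_fun (E - {b}) (identify a b f)"
proof (rule polymatroid_funI)
  let ?\<phi> = "\<lambda>S. if a \<in> S then insert b S else S"
  show "identify a b f {} = 0"
    using polymatroid_fun_empty[OF f] by (simp add: identify_def)
  show "identify a b f S \<le> identify a b f T" if "S \<subseteq> T" "T \<subseteq> E - {b}" for S T
    unfolding identify_def using that \<open>b \<in> E\<close> by (intro polymatroid_fun_mono[OF f]) auto
  show "identify a b f (S \<union> T) + identify a b f (S \<inter> T) \<le> identify a b f S + identify a b f T"
    if "S \<subseteq> E - {b}" "T \<subseteq> E - {b}" for S T
  proof -
    have "?\<phi> (S \<union> T) = ?\<phi> S \<union> ?\<phi> T" "?\<phi> (S \<inter> T) = ?\<phi> S \<inter> ?\<phi> T"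
      using that by auto
    moreover have "f (?\<phi> S \<union> ?\<phi> T) + f (?\<phi> S \<inter> ?\<phi> T) \<le> f (?\<phi> S) + f (?\<phi> T)"
      using that \<open>b \<in> E\<close> by (intro polymatroid_fun_submodular[OF f]) auto
    ultimately show ?thesis
      unfolding identify_def by (simp only:)
  qed
qed

lemma
  assumes "w \<in> polymatroid (E - {b}) (identify a b f)"
  shows polymatroid_identify_sum_le: "S \<subseteq> E - {a, b} \<Longrightarrow> sum w S \<le> f S"
    and polymatroid_identify_sum_insert_le:
      "a \<in> E \<Longrightarrow> a \<noteq> b \<Longrightarrow> S \<subseteq> E - {b} \<Longrightarrow> sum w (insert a S) \<le> f (insert b (insert a S))"
proof -
  show "sum w S \<le> f S" if "S \<subseteq> E - {a, b}" for S
  proof -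
    have "a \<notin> S" "S \<subseteq> E - {b}"
      using that by auto
    then show ?thesis
      using polymatroid_sum_le[OF assms, of S] by (simp add: identify_def)
  qed
  show "sum w (insert a S) \<le> f (insert b (insert a S))"
    if "a \<in> E" "a \<noteq> b" "S \<subseteq> E - {b}" for S
    using polymatroid_sum_le[OF assms, of "insert a S"] that by (simp add: identify_def)
qed

lemma polymatroid_identify_exchange:
  assumes f: "polymatroid_fun E f" and "finite E" and ab: "a \<in> E" "b \<in> E" "a \<noteq> b"
    and w: "w \<in> polymatroid (E - {b}) (identify a b f)"
    and S: "S \<subseteq> E - {a, b}" and T: "T \<subseteq> E - {a, b}"
  shows "w a + sum w S + sum w T \<le> f (insert a S) + f (insert b T)"
proof -
  have "finite S" "finite T" "a \<notin> S \<union> T"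
    using finite_subset[OF S] finite_subset[OF T] S T \<open>finite E\<close> by auto
  then have "w a + sum w S + sum w T = sum w (insert a (S \<union> T)) + sum w (S \<inter> T)"
    using sum.union_inter[of S T w] by simp
  also have "\<dots> \<le> f (insert b (insert a (S \<union> T))) + f (S \<inter> T)"
    using S T ab
    by (intro add_mono polymatroid_identify_sum_insert_le[OF w] polymatroid_identify_sum_le[OF w]) auto
  also have "insert b (insert a (S \<union> T)) = insert a S \<union> insert b T"
    by auto
  also have "S \<inter> T = insert a S \<inter> insert b T"
    using S T ab by auto
  also have "f (insert a S \<union> insert b T) + f (insert a S \<inter> insert b T) \<le> f (insert a S) + f (insert b T)"
    using S T ab by (intro polymatroid_fun_submodular[OF f]) auto
  finally show ?thesis .
qed

lemma polymatroid_split_at: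
  fixes f :: "'e set \<Rightarrow> real"
  assumes f: "polymatroid_fun E f" and "finite E" and ab: "a \<in> E" "b \<in> E" "a \<noteq> b"
    and w': "w' \<in> polymatroid (E - {b}) (identify a b f)"
    and t: "0 \<le> t" "t \<le> w' a" "\<And>S. S \<subseteq> E - {a, b} \<Longrightarrow> t + sum w' S \<le> f (insert b S)"
    and t_tight: "t = w' a \<or> (\<exists>T. T \<subseteq> E - {a, b} \<and> t + sum w' T = f (insert b T))"
  shows "w'(a := w' a - t, b := t) \<in> polymatroid E f"
proof (rule polymatroidI)
  define w where "w = w'(a := w' a - t, b := t)"
  have w_ab: "w a = w' a - t" "w b = t"
    using ab by (simp_all add: w_def)
  have sum_w: "sum w S = sum w' S" if "S \<subseteq> E - {a, b}" for S
    unfolding w_def using that by (intro sum.cong) auto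
  show "0 \<le> w e" if "e \<in> E" for e
    using that t ab polymatroid_nonneg[OF w', of e] by (auto simp: w_def)
  show "sum w F \<le> f F" if F: "F \<subseteq> E" for F
  proof -
    define S where "S = F - {a, b}"
    have S: "S \<subseteq> E - {a, b}" "S \<subseteq> E - {b}" "finite S" "a \<notin> S" "b \<notin> S"
      using F \<open>finite E\<close> finite_subset by (auto simp: S_def)
    consider "F = insert a (insert b S)" | "F = insert a S" | "F = insert b S" | "F = S"
      unfolding S_def by blast
    then show ?thesis
    proof cases
      case 1
      have "sum w F = sum w' (insert a S)"
        using 1 S ab by (simp add: w_ab sum_w)
      also have "\<dots> \<le> f F"
        using polymatroid_identify_sum_insert_le[OF w' ab(1,3) S(2)] 1 by (simp add: insert_commute)
      finally show ?thesis .
    next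
      case 2
      have "sum w F = w' a - t + sum w' S"
        using 2 S ab by (simp add: w_ab sum_w)
      also have "\<dots> \<le> f F"
        using t_tight
      proof
        assume "t = w' a"
        then show ?thesis
          using polymatroid_identify_sum_le[OF w' S(1)] polymatroid_fun_mono[OF f, of S F] F 2
          by (simp add: subset_insertI)
      next
        assume "\<exists>T. T \<subseteq> E - {a, b} \<and> t + sum w' T = f (insert b T)"
        then obtain T where T: "T \<subseteq> E - {a, b}" "t + sum w' T = f (insert b T)"
          by blast
        have "w' a + sum w' S + sum w' T \<le> f F + f (insert b T)"
          using polymatroid_identify_exchange[OF f \<open>finite E\<close> ab w' S(1) T(1)] 2 by simp
        with T(2) show ?thesis
          by linarith
      qed
      finally show ?thesis .
    next
      case 3
      then show ?thesis
        using t(3)[OF S(1)] S ab by (simp add: w_ab sum_w)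
    next
      case 4
      then show ?thesis
        using sum_w[OF S(1)] polymatroid_identify_sum_le[OF w' S(1)] by simp
    qed
  qed
qed

lemma polymatroid_split:
  fixes f :: "'e set \<Rightarrow> real"
  assumes f: "polymatroid_fun E f" and "finite E" and ab: "a \<in> E" "b \<in> E" "a \<noteq> b"
    and w': "w' \<in> polymatroid (E - {b}) (identify a b f)"
  shows "\<exists>t. w'(a := w' a - t, b := t) \<in> polymatroid E f"
proof -
  define slack where "slack = (\<lambda>S. f (insert b S) - sum w' S) ` Pow (E - {a, b})"
  have slack: "finite slack" "slack \<noteq> {}"
    unfolding slack_def using \<open>finite E\<close> by auto
  \<comment> \<open>move as much of \<open>w' a\<close> to \<open>b\<close> as the sets containing \<open>b\<close> but not \<open>a\<close> allow\<close>
  define t where "t = min (w' a) (Min slack)"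
  have "0 \<le> Min slack"
  proof (subst Min_ge_iff[OF slack], intro ballI)
    fix d assume "d \<in> slack"
    then obtain S where S: "S \<subseteq> E - {a, b}" "d = f (insert b S) - sum w' S"
      unfolding slack_def by blast
    have "sum w' S \<le> f S"
      using polymatroid_identify_sum_le[OF w' S(1)] .
    also have "\<dots> \<le> f (insert b S)"
      using S ab by (intro polymatroid_fun_mono[OF f]) auto
    finally show "0 \<le> d"
      using S by simp
  qed
  then have t_nonneg: "0 \<le> t"
    using polymatroid_nonneg[OF w', of a] ab unfolding t_def by simp
  have t_le: "t \<le> w' a"
    unfolding t_def by simp
  have t_slack: "t + sum w' S \<le> f (insert b S)" if "S \<subseteq> E - {a, b}" for S
  proof -
    have "Min slack \<le> f (insert b S) - sum w' S"
      using that \<open>finite slack\<close> unfolding slack_def by (intro Min_le) auto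
    then show ?thesis
      unfolding t_def by linarith
  qed
  obtain T where T: "T \<subseteq> E - {a, b}" "Min slack = f (insert b T) - sum w' T"
    using Min_in[OF slack] unfolding slack_def by blast
  have "t = w' a \<or> (\<exists>T. T \<subseteq> E - {a, b} \<and> t + sum w' T = f (insert b T))"
  proof (cases "w' a \<le> Min slack")
    case True
    then show ?thesis
      unfolding t_def by simp
  next
    case False
    then have "t = Min slack"
      unfolding t_def by simp
    then show ?thesis
      using T by (intro disjI2 exI[of _ T]) simp
  qed
  then have "w'(a := w' a - t, b := t) \<in> polymatroid E f"
    using polymatroid_split_at[OF f \<open>finite E\<close> ab w' t_nonneg t_le t_slack] by blast
  then show ?thesis ..
qed

lemma sum_fun_upd_shift:
  fixes w :: "'a \<Rightarrow> real"
  assumes "finite K" "a \<noteq> b" "a \<in> K \<longleftrightarrow> b \<in> K"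
  shows "sum (w(a := w a - t, b := t)) K = sum w (K - {b})"
proof (cases "a \<in> K")
  case True
  define K' where "K' = K - {a, b}"
  have K: "K = insert a (insert b K')" "K - {b} = insert a K'" "a \<notin> K'" "b \<notin> K'" "finite K'"
    using assms True by (auto simp: K'_def)
  have "sum (w(a := w a - t, b := t)) K' = sum w K'"
    using K by (intro sum.cong) auto
  then show ?thesis
    unfolding K(1,2) using K assms(2) by simp
next
  case False
  then show ?thesis
    using assms by (intro sum.cong) auto
qed

lemma
  fixes f :: "'e set \<Rightarrow> real" and y :: "'i \<Rightarrow> real"
  assumes inj: "inj_on p E" and f: "polymatroid_fun E f" and pE: "p ` E \<subseteq> N"
    and y_nonneg: "\<And>i. i \<in> N \<Longrightarrow> 0 \<le> y i"
    and y_le: "\<And>H. H \<subseteq> N \<Longrightarrow> sum y H \<le> f {e \<in> E. p e \<in> H}"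
  shows induced_polymatroid_lift_inj: "(\<lambda>e. y (p e)) \<in> polymatroid E f"
    and induced_polymatroid_lift_inj_fibre: "i \<in> N \<Longrightarrow> sum (\<lambda>e. y (p e)) {e \<in> E. p e = i} = y i"
proof -
  show "(\<lambda>e. y (p e)) \<in> polymatroid E f"
  proof (rule polymatroidI)
    show "0 \<le> y (p e)" if "e \<in> E" for e
      using that pE y_nonneg by auto
    show "sum (\<lambda>e. y (p e)) F \<le> f F" if "F \<subseteq> E" for F
    proof -
      have "sum (\<lambda>e. y (p e)) F = sum y (p ` F)"
        using inj_on_subset[OF inj that] by (simp add: sum.reindex)
      also have "\<dots> \<le> f {e \<in> E. p e \<in> p ` F}"
        using that pE by (intro y_le) auto
      also have "{e \<in> E. p e \<in> p ` F} = F"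
        using inj that by (auto simp: inj_on_def)
      finally show ?thesis .
    qed
  qed
  show "sum (\<lambda>e. y (p e)) {e \<in> E. p e = i} = y i" if "i \<in> N"
  proof (cases "i \<in> p ` E")
    case True
    then obtain e where "e \<in> E" "p e = i"
      by blast
    then have "{e' \<in> E. p e' = i} = {e}"
      using inj by (auto simp: inj_on_def)
    then show ?thesis
      using \<open>p e = i\<close> by simp
  next
    case False
    then have empty: "{e \<in> E. p e = i} = {}"
      by auto
    then have "y i \<le> 0"
      using y_le[of "{i}"] that by (simp add: empty polymatroid_fun_empty[OF f])
    then show ?thesis
      using empty y_nonneg[OF that] by simp
  qed
qed

lemma induced_polymatroid_lift:
  fixes f :: "'e set \<Rightarrow> real" and p :: "'e \<Rightarrow> 'i" and y :: "'i \<Rightarrow> real"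
  assumes "finite E" "polymatroid_fun E f" "p ` E \<subseteq> N"
    and "\<And>i. i \<in> N \<Longrightarrow> 0 \<le> y i"
    and "\<And>H. H \<subseteq> N \<Longrightarrow> sum y H \<le> f {e \<in> E. p e \<in> H}"
  shows "\<exists>w \<in> polymatroid E f. \<forall>i\<in>N. sum w {e \<in> E. p e = i} = y i"
  using assms
proof (induction "card E" arbitrary: E f rule: less_induct)
  case less
  note fin = less.prems(1) and f = less.prems(2) and pE = less.prems(3)
    and y_nonneg = less.prems(4) and y_le = less.prems(5)
  show ?case
  proof (cases "inj_on p E")
    case True
    then show ?thesis
      using induced_polymatroid_lift_inj[OF True f pE y_nonneg y_le]
        induced_polymatroid_lift_inj_fibre[OF True f pE y_nonneg y_le] by blast
  next
    case False
    then obtain a b where ab: "a \<in> E" "b \<in> E" "a \<noteq> b" and "p a = p b"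
      unfolding inj_on_def by blast
    have "\<exists>w' \<in> polymatroid (E - {b}) (identify a b f). \<forall>i\<in>N. sum w' {e \<in> E - {b}. p e = i} = y i"
    proof (rule less.hyps)
      show "card (E - {b}) < card E"
        using card_Diff1_less[OF fin ab(2)] .
      show "polymatroid_fun (E - {b}) (identify a b f)"
        using polymatroid_fun_identify[OF f ab(2)] .
      show "sum y H \<le> identify a b f {e \<in> E - {b}. p e \<in> H}" if "H \<subseteq> N" for H
      proof -
        have "identify a b f {e \<in> E - {b}. p e \<in> H} = f {e \<in> E. p e \<in> H}"
          unfolding identify_def using ab \<open>p a = p b\<close> by (intro arg_cong[where f = f]) auto
        then show ?thesis
          using y_le[OF that] by simp
      qed
    qed (use fin pE y_nonneg in auto)
    then obtain w' where w': "w' \<in> polymatroid (E - {b}) (identify a b f)"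
      and fibres: "\<forall>i\<in>N. sum w' {e \<in> E - {b}. p e = i} = y i"
      by blast
    obtain t where "w'(a := w' a - t, b := t) \<in> polymatroid E f"
      using polymatroid_split[OF f fin ab w'] by blast
    moreover have "sum (w'(a := w' a - t, b := t)) {e \<in> E. p e = i} = y i" if "i \<in> N" for i
    proof -
      have "{e \<in> E. p e = i} - {b} = {e \<in> E - {b}. p e = i}"
        by auto
      then show ?thesis
        using sum_fun_upd_shift[of "{e \<in> E. p e = i}" a b w' t] fin ab \<open>p a = p b\<close> fibres that
        by simp
    qed
    ultimately show ?thesis
      by blast
  qed
qed

definition initial_segment :: "('a \<times> 'a) set \<Rightarrow> 'a set \<Rightarrow> 'a set \<Rightarrow> bool" where
  "initial_segment r S P \<longleftrightarrow> P \<subseteq> S \<and> (\<forall>i\<in>P. \<forall>k\<in>S. (k, i) \<in> r \<longrightarrow> k \<in> P)"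

lemma finite_total_on_has_last:
  assumes "finite S" "S \<noteq> {}" "trans r" "total_on S r"
  shows "\<exists>l\<in>S. \<forall>k\<in>S - {l}. (k, l) \<in> r"
  using assms(1,2,4)
proof (induction S rule: finite_ne_induct)
  case (singleton x)
  then show ?case
    by simp
next
  case (insert a S)
  then obtain l where l: "l \<in> S" "\<forall>k\<in>S - {l}. (k, l) \<in> r"
    using total_on_subset[of "insert a S" r S] by blast
  have "(l, a) \<in> r \<or> (a, l) \<in> r"
    using insert.prems insert.hyps l unfolding total_on_def by (metis insertCI)
  then show ?case
  proof
    assume "(l, a) \<in> r"
    then have "\<forall>k\<in>insert a S - {a}. (k, a) \<in> r"
      using l transD[OF \<open>trans r\<close>] by blast
    then show ?case
      by blast
  next
    assume "(a, l) \<in> r"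
    then show ?case
      using l by blast
  qed
qed

lemma initial_segment_remove_last:
  assumes r: "trans r" "irrefl r" and l: "\<forall>k\<in>S - {l}. (k, l) \<in> r"
    and P: "initial_segment r (S - {l}) P"
  shows "initial_segment r S P"
proof -
  have "k \<noteq> l" if "i \<in> P" "(k, i) \<in> r" for i k
    using that P l r transD[OF r(1)] unfolding initial_segment_def irrefl_def by blast
  then show ?thesis
    using P unfolding initial_segment_def by blast
qed

lemma sum_mult_nonneg_if_initial_segments_nonneg:
  fixes u d :: "'a \<Rightarrow> real"
  assumes "finite S" "strict_linear_order_on S r"
    and "\<And>i. i \<in> S \<Longrightarrow> 0 \<le> u i"
    and "\<And>i k. i \<in> S \<Longrightarrow> k \<in> S \<Longrightarrow> (k, i) \<in> r \<Longrightarrow> u i \<le> u k"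
    and "\<And>P. initial_segment r S P \<Longrightarrow> 0 \<le> sum d P"
  shows "0 \<le> (\<Sum>i\<in>S. u i * d i)"
  using assms
proof (induction "card S" arbitrary: S u rule: less_induct)
  case less
  note fin = less.prems(1) and u_nonneg = less.prems(3) and u_mono = less.prems(4)
    and d_seg = less.prems(5)
  have r: "trans r" "irrefl r" "total_on S r"
    using less.prems(2) unfolding strict_linear_order_on_def by auto
  show ?case
  proof (cases "S = {}")
    case True
    then show ?thesis
      by simp
  next
    case False
    then obtain l where l: "l \<in> S" "\<forall>k\<in>S - {l}. (k, l) \<in> r"
      using finite_total_on_has_last[OF fin _ r(1,3)] by blast
    \<comment> \<open>Abel summation: peel off the last element with the weights shifted by \<open>u l\<close>\<close>
    have "0 \<le> (\<Sum>i\<in>S - {l}. (u i - u l) * d i)"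
    proof (rule less.hyps)
      show "card (S - {l}) < card S"
        using card_Diff1_less[OF fin l(1)] .
      show "strict_linear_order_on (S - {l}) r"
        using r total_on_subset[OF r(3)] unfolding strict_linear_order_on_def by blast
      show "0 \<le> u i - u l" if "i \<in> S - {l}" for i
        using that l u_mono by force
      show "0 \<le> sum d P" if "initial_segment r (S - {l}) P" for P
        using d_seg initial_segment_remove_last[OF r(1,2) l(2) that] by blast
    qed (use fin u_mono in auto)
    moreover have "0 \<le> u l * sum d S"
      using u_nonneg[OF l(1)] d_seg[of S] by (simp add: initial_segment_def)
    moreover have "(\<Sum>i\<in>S. u i * d i) = (\<Sum>i\<in>S - {l}. (u i - u l) * d i) + u l * sum d S"
    proof -
      have "(\<Sum>i\<in>S. u i * d i) = (\<Sum>i\<in>S. (u i - u l) * d i) + u l * sum d S"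
        by (simp add: algebra_simps sum.distrib sum_distrib_left sum_subtractf)
      also have "(\<Sum>i\<in>S. (u i - u l) * d i) = (\<Sum>i\<in>S - {l}. (u i - u l) * d i)"
        using fin l(1) by (simp add: sum.remove)
      finally show ?thesis .
    qed
    ultimately show ?thesis
      by simp
  qed
qed

locale market =
  fixes n m :: nat
    and E0 :: "(nat \<times> nat) set"
    and fs :: "nat \<Rightarrow> (nat \<times> nat) set \<Rightarrow> real"
  assumes E0_subset: "E0 \<subseteq> {1..n} \<times> {1..m}"
    and seller_polymatroid: "\<And>j. j \<in> {1..m} \<Longrightarrow> polymatroid_fun (sellerE E0 j) (fs j)"
begin

abbreviation E :: "(nat \<times> nat) set" where
  "E \<equiv> Emod n m E0"

abbreviation f :: "(nat \<times> nat) set \<Rightarrow> real" where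
  "f \<equiv> fmod n m E0 fs"

abbreviation g :: "nat set \<Rightarrow> real" where
  "g H \<equiv> f (buyerE E H)"

lemma finite_E: "finite E"
proof -
  have "finite E0"
    using E0_subset finite_subset by blast
  then show ?thesis
    unfolding Emod_def by simp
qed

lemma E_subset: "E \<subseteq> {1..n+m} \<times> {1..m}"
  using E0_subset unfolding Emod_def by auto

lemma sellerE_Emod: "j \<in> {1..m} \<Longrightarrow> sellerE E j = insert (n + j, j) (sellerE E0 j)"
  unfolding sellerE_def Emod_def by auto

lemma polymatroid_fun_fext:
  assumes "j \<in> {1..m}"
  shows "polymatroid_fun (sellerE E j) (fext n E0 fs j)"
proof -
  have "(n + j, j) \<notin> sellerE E0 j"
    using E0_subset by (auto simp: sellerE_def)
  from polymatroid_fun_saturate[OF seller_polymatroid[OF assms] this]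
  show ?thesis
    using assms by (simp add: sellerE_Emod fext_def[abs_def])
qed

lemma polymatroid_fun_fmod: "polymatroid_fun UNIV f"
  unfolding fmod_def[abs_def] by (rule polymatroid_fun_sum) (rule polymatroid_fun_fext)

lemma fmod_seller:
  assumes j: "j \<in> {1..m}" and F: "F \<subseteq> sellerE E j"
  shows "f F = fext n E0 fs j F"
proof -
  have "fext n E0 fs j' (F \<inter> sellerE E j') = 0" if "j' \<in> {1..m} - {j}" for j'
  proof -
    have "F \<inter> sellerE E j' = {}"
      using F that unfolding sellerE_def by auto
    then show ?thesis
      using polymatroid_fun_empty[OF polymatroid_fun_fext, of j'] that by simp
  qed
  then have "f F = fext n E0 fs j (F \<inter> sellerE E j)"
    unfolding fmod_def using j by (simp add: sum.remove)
  then show ?thesis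
    using F by (simp add: Int_absorb2)
qed

lemma Pmod_eq_polymatroid: "Pmod n m E0 fs = polymatroid E f"
proof (intro set_eqI iffI)
  fix w assume w: "w \<in> Pmod n m E0 fs"
  show "w \<in> polymatroid E f"
  proof (rule polymatroidI)
    show "0 \<le> w e" if "e \<in> E" for e
      using w that unfolding Pmod_def by blast
    show "sum w F \<le> f F" if F: "F \<subseteq> E" for F
    proof -
      have "finite F" "snd ` F \<subseteq> {1..m}"
        using F finite_E E_subset finite_subset by auto
      from sum.group[OF this(1) _ this(2), of w]
      have "sum w F = (\<Sum>j\<in>{1..m}. sum w {e \<in> F. snd e = j})"
        by simp
      also have "\<dots> = (\<Sum>j\<in>{1..m}. sum w (F \<inter> sellerE E j))"
        using F by (intro sum.cong refl arg_cong[where f = "sum w"]) (auto simp: sellerE_def)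
      also have "\<dots> \<le> (\<Sum>j\<in>{1..m}. fext n E0 fs j (F \<inter> sellerE E j))"
        using w unfolding Pmod_def by (intro sum_mono) auto
      also have "\<dots> = f F"
        unfolding fmod_def ..
      finally show ?thesis .
    qed
  qed
next
  fix w assume w: "w \<in> polymatroid E f"
  show "w \<in> Pmod n m E0 fs"
    unfolding Pmod_def
  proof (intro CollectI conjI ballI allI impI)
    show "0 \<le> w e" if "e \<in> E" for e
      using polymatroid_nonneg[OF w that] .
    show "sum w F \<le> fext n E0 fs j F" if "j \<in> {1..m}" "F \<subseteq> sellerE E j" for j F
      using polymatroid_sum_le[OF w, of F] fmod_seller[OF that] that(2)
      unfolding sellerE_def by auto
  qed
qed

lemma polymatroid_fun_g: "polymatroid_fun UNIV g"
  using polymatroid_fun_preimage[OF polymatroid_fun_subset[OF polymatroid_fun_fmod], of E fst]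
  unfolding buyerE_def by simp

lemma g_saturated:
  assumes "{n+1..n+m} \<subseteq> H"
  shows "g H = (\<Sum>j\<in>{1..m}. fs j (sellerE E0 j))"
  unfolding fmod_def
proof (intro sum.cong refl)
  fix j assume j: "j \<in> {1..m}"
  have "(n + j, j) \<in> buyerE E H \<inter> sellerE E j"
    using j assms unfolding buyerE_def sellerE_def Emod_def by auto
  then show "fext n E0 fs j (buyerE E H \<inter> sellerE E j) = fs j (sellerE E0 j)"
    unfolding fext_def by simp
qed

lemma sum_buyerE:
  assumes "finite H"
  shows "(\<Sum>i\<in>H. sum w (buyerE E {i})) = sum w (buyerE E H)"
proof -
  have "finite (buyerE E H)" "fst ` buyerE E H \<subseteq> H"
    using finite_E unfolding buyerE_def by auto
  from sum.group[OF this(1) assms this(2), of w]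
  have "sum w (buyerE E H) = (\<Sum>i\<in>H. sum w {e \<in> buyerE E H. fst e = i})"
    by simp
  also have "\<dots> = (\<Sum>i\<in>H. sum w (buyerE E {i}))"
    by (intro sum.cong refl arg_cong[where f = "sum w"]) (auto simp: buyerE_def)
  finally show ?thesis ..
qed

end

lemma Hset_subset: "Hset n m v \<rho> i \<subseteq> {1..n+m}"
  unfolding Hset_def by auto

lemma strict_linear_order_Hset: "strict_linear_order_on {1..n+m} {(k, i). k \<in> Hset n m v \<rho> i}"
  unfolding strict_linear_order_on_def trans_def irrefl_def total_on_def Hset_def by auto

locale greedy_allocation = market +
  fixes v B \<rho> x :: "nat \<Rightarrow> real"
  assumes v_pos: "\<And>i. i \<in> {1..n} \<Longrightarrow> 0 < v i"
    and B_nonneg: "\<And>i. i \<in> {1..n} \<Longrightarrow> 0 \<le> B i"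
    and \<rho>_pos: "\<And>j. j \<in> {1..m} \<Longrightarrow> 0 < \<rho> j"
    and x_rec: "\<And>i. i \<in> {1..n+m} \<Longrightarrow> x i = xrhs n m E0 fs v \<rho> B x i"
begin

abbreviation N :: "nat set" where
  "N \<equiv> {1..n+m}"

abbreviation prec :: "(nat \<times> nat) set" where
  "prec \<equiv> {(k, i). k \<in> Hset n m v \<rho> i}"

abbreviation marginals :: "nat \<Rightarrow> real set" where
  "marginals i \<equiv> (\<lambda>H. g (H \<union> {i}) - sum x H) ` Pow (Hset n m v \<rho> i)"

definition capped :: "nat \<Rightarrow> bool" where
  "capped i \<longleftrightarrow> i \<le> n \<and> x i = B i / v i"

lemma finite_marginals: "finite (marginals i)" "marginals i \<noteq> {}"
  using finite_subset[OF Hset_subset] by auto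

lemma x_eq:
  "i \<in> N \<Longrightarrow> x i = (if i \<le> n then min (B i / v i) (Min (marginals i)) else Min (marginals i))"
  using x_rec unfolding xrhs_def Let_def by simp

lemma x_le_marginal:
  assumes "i \<in> N" "H \<subseteq> Hset n m v \<rho> i"
  shows "x i \<le> g (H \<union> {i}) - sum x H"
proof -
  have "x i \<le> Min (marginals i)"
    using x_eq[OF assms(1)] by simp
  also have "\<dots> \<le> g (H \<union> {i}) - sum x H"
    using assms(2) by (intro Min_le finite_marginals) auto
  finally show ?thesis .
qed

lemma x_le_cap: "i \<in> {1..n} \<Longrightarrow> x i \<le> B i / v i"
  using x_eq[of i] by auto

lemma x_attains_marginal:
  assumes "i \<in> N" "\<not> capped i"
  shows "\<exists>H \<subseteq> Hset n m v \<rho> i. x i = g (H \<union> {i}) - sum x H"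
proof -
  have "x i = Min (marginals i)"
    using x_eq[OF assms(1)] assms(2) by (auto simp: capped_def min_def)
  then show ?thesis
    using Min_in[OF finite_marginals] by auto
qed

lemma sum_x_le_g:
  assumes H: "H \<subseteq> N"
  shows "sum x H \<le> g H"
proof (cases "H = {}")
  case True
  then show ?thesis
    using polymatroid_fun_empty[OF polymatroid_fun_g] by simp
next
  case False
  have fin: "finite H"
    using H finite_subset by blast
  have prec: "trans prec" "total_on H prec"
    using strict_linear_order_Hset total_on_subset H unfolding strict_linear_order_on_def by blast+
  obtain l where l: "l \<in> H" "H - {l} \<subseteq> Hset n m v \<rho> l"
    using finite_total_on_has_last[OF fin False prec] by auto
  have "sum x H = x l + sum x (H - {l})"
    using fin l(1) by (simp add: sum.remove)
  also have "\<dots> \<le> g (H - {l} \<union> {l})"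
    using x_le_marginal[of l "H - {l}"] l H by auto
  also have "H - {l} \<union> {l} = H"
    using l(1) by auto
  finally show ?thesis .
qed

lemma x_nonneg:
  assumes i: "i \<in> N"
  shows "0 \<le> x i"
proof -
  have "0 \<le> Min (marginals i)"
  proof (subst Min_ge_iff[OF finite_marginals], intro ballI)
    fix d assume "d \<in> marginals i"
    then obtain H where H: "H \<subseteq> Hset n m v \<rho> i" "d = g (H \<union> {i}) - sum x H"
      by blast
    have "sum x H \<le> g H"
      using H(1) Hset_subset by (intro sum_x_le_g) blast
    also have "\<dots> \<le> g (H \<union> {i})"
      by (intro polymatroid_fun_mono[OF polymatroid_fun_g]) auto
    finally show "0 \<le> d"
      using H(2) by simp
  qed
  moreover have "i \<le> n \<Longrightarrow> 0 \<le> B i / v i"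
    using i v_pos[of i] B_nonneg[of i] by simp
  ultimately show ?thesis
    using x_eq[OF i] by auto
qed

lemma allocation_realizable: "\<exists>w \<in> Pmod n m E0 fs. \<forall>i\<in>N. sum w (buyerE E {i}) = x i"
proof -
  have "\<exists>w \<in> polymatroid E f. \<forall>i\<in>N. sum w {e \<in> E. fst e = i} = x i"
  proof (rule induced_polymatroid_lift)
    show "polymatroid_fun E f"
      using polymatroid_fun_subset[OF polymatroid_fun_fmod] by blast
    show "sum x H \<le> f {e \<in> E. fst e \<in> H}" if "H \<subseteq> N" for H
      using sum_x_le_g[OF that] unfolding buyerE_def .
  qed (use finite_E E_subset x_nonneg in auto)
  then show ?thesis
    unfolding Pmod_eq_polymatroid buyerE_def by simp
qed

definition tight :: "nat set \<Rightarrow> bool" where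
  "tight T \<longleftrightarrow> T \<subseteq> N \<and> sum x T = g T"

lemma tight_Un:
  assumes "tight A" "tight C"
  shows "tight (A \<union> C)"
proof -
  have AC: "A \<subseteq> N" "C \<subseteq> N" and fin: "finite A" "finite C"
    using assms finite_subset unfolding tight_def by auto
  have "g (A \<union> C) + g (A \<inter> C) \<le> g A + g C"
    by (rule polymatroid_fun_submodular[OF polymatroid_fun_g]) auto
  also have "\<dots> = sum x (A \<union> C) + sum x (A \<inter> C)"
    using assms sum.union_inter[OF fin, of x] unfolding tight_def by simp
  finally have "g (A \<union> C) + g (A \<inter> C) \<le> sum x (A \<union> C) + sum x (A \<inter> C)" .
  moreover have "sum x (A \<union> C) \<le> g (A \<union> C)" "sum x (A \<inter> C) \<le> g (A \<inter> C)"
    using AC by (intro sum_x_le_g; auto)+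
  ultimately show ?thesis
    using AC unfolding tight_def by auto
qed

lemma tight_Union: "finite \<F> \<Longrightarrow> \<forall>T\<in>\<F>. tight T \<Longrightarrow> tight (\<Union>\<F>)"
proof (induction \<F> rule: finite_induct)
  case empty
  then show ?case
    using polymatroid_fun_empty[OF polymatroid_fun_g] unfolding tight_def by simp
next
  case (insert T \<F>)
  then show ?case
    using tight_Un by simp
qed

lemma initial_segment_tight_core:
  assumes "initial_segment prec N S"
  shows "\<exists>U \<subseteq> S. tight U \<and> (\<forall>k \<in> S - U. capped k)"
proof -
  have S: "S \<subseteq> N" and pre: "\<And>i. i \<in> S \<Longrightarrow> Hset n m v \<rho> i \<subseteq> S"
    using assms Hset_subset unfolding initial_segment_def by blast+
  define U where "U = \<Union>{T \<in> Pow S. tight T}"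
  have "tight U"
    unfolding U_def using finite_subset[OF S] by (intro tight_Union) auto
  moreover have "capped k" if k: "k \<in> S" "k \<notin> U" for k
  proof (rule ccontr)
    assume "\<not> capped k"
    then obtain H where H: "H \<subseteq> Hset n m v \<rho> k" "x k = g (H \<union> {k}) - sum x H"
      using x_attains_marginal S k by blast
    have "finite H"
      using H(1) Hset_subset by (meson finite_atLeastAtMost finite_subset subset_trans)
    moreover have "k \<notin> H"
      using H(1) unfolding Hset_def by auto
    moreover have "H \<union> {k} \<subseteq> S"
      using H(1) pre k(1) by auto
    ultimately have "tight (H \<union> {k})"
      using H(2) S unfolding tight_def by auto
    then have "H \<union> {k} \<subseteq> U"
      unfolding U_def using \<open>H \<union> {k} \<subseteq> S\<close> by blast
    then show False
      using k by auto
  qed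
  moreover have "U \<subseteq> S"
    unfolding U_def by blast
  ultimately show ?thesis
    by blast
qed

lemma sum_x_eq_supply: "sum x N = g N"
proof -
  have "initial_segment prec N N"
    unfolding initial_segment_def by blast
  then obtain U where U: "U \<subseteq> N" "tight U" "\<forall>k\<in>N - U. capped k"
    using initial_segment_tight_core by blast
  have "{n+1..n+m} \<subseteq> U"
  proof
    fix k assume k: "k \<in> {n+1..n+m}"
    show "k \<in> U"
    proof (rule ccontr)
      assume "k \<notin> U"
      then have "capped k"
        using U(3) k by auto
      then show False
        using k unfolding capped_def by simp
    qed
  qed
  then have "g N = g U"
    using g_saturated[of N] g_saturated[of U] by simp
  also have "\<dots> = sum x U"
    using U(2) unfolding tight_def by simp
  also have "\<dots> \<le> sum x N"
    using U(1) x_nonneg by (intro sum_mono2) auto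
  finally show ?thesis
    using sum_x_le_g[of N] by simp
qed

lemma vmod_nonneg:
  assumes "i \<in> N"
  shows "0 \<le> vmod n v \<rho> i"
proof (cases "i \<le> n")
  case True
  then show ?thesis
    using assms v_pos[of i] by (simp add: vmod_def)
next
  case False
  then have "i - n \<in> {1..m}"
    using assms by auto
  then show ?thesis
    using False \<rho>_pos[of "i - n"] by (simp add: vmod_def)
qed

lemma lw_term_eq:
  assumes "i \<in> N"
  shows "lw_term n v \<rho> B i t = vmod n v \<rho> i * (if i \<le> n then min t (B i / v i) else t)"
proof (cases "i \<le> n")
  case True
  then have "0 < v i"
    using assms v_pos by simp
  then have "min (v i * t) (B i) = v i * min t (B i / v i)"
    by (simp add: min_def pos_le_divide_eq mult.commute)
  then show ?thesis
    using True unfolding lw_term_def vmod_def by simp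
next
  case False
  then show ?thesis
    unfolding lw_term_def vmod_def by simp
qed

lemma liquid_welfare_le:
  assumes y: "\<And>H. H \<subseteq> N \<Longrightarrow> sum y H \<le> g H"
  shows "(\<Sum>i\<in>N. lw_term n v \<rho> B i (y i)) \<le> (\<Sum>i\<in>N. lw_term n v \<rho> B i (x i))"
proof -
  define z where "z i = (if i \<le> n then min (y i) (B i / v i) else y i)" for i
  have "sum z P \<le> sum x P" if P: "initial_segment prec N P" for P
  proof -
    obtain U where U: "U \<subseteq> P" "tight U" "\<forall>k\<in>P - U. capped k"
      using initial_segment_tight_core[OF P] by blast
    have "P \<subseteq> N" "finite P"
      using P finite_subset unfolding initial_segment_def by auto
    have "sum z U \<le> sum y U"
      unfolding z_def by (intro sum_mono) auto
    also have "\<dots> \<le> g U"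
      using y U(1) \<open>P \<subseteq> N\<close> by auto
    also have "\<dots> = sum x U"
      using U(2) unfolding tight_def by simp
    finally have "sum z U \<le> sum x U" .
    moreover have "sum z (P - U) \<le> sum x (P - U)"
      using U(3) unfolding capped_def z_def by (intro sum_mono) auto
    ultimately show ?thesis
      using \<open>finite P\<close> U(1) by (simp add: sum.subset_diff)
  qed
  then have "0 \<le> (\<Sum>i\<in>N. vmod n v \<rho> i * (x i - z i))"
    by (intro sum_mult_nonneg_if_initial_segments_nonneg[OF _ strict_linear_order_Hset] vmod_nonneg)
      (auto simp: Hset_def sum_subtractf)
  moreover have "lw_term n v \<rho> B i (y i) = vmod n v \<rho> i * z i" if "i \<in> N" for i
    using lw_term_eq[OF that] unfolding z_def by simp
  moreover have "lw_term n v \<rho> B i (x i) = vmod n v \<rho> i * x i" if "i \<in> N" for i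
    using lw_term_eq[OF that] x_le_cap[of i] that by (auto simp: min_absorb1)
  ultimately show ?thesis
    by (simp add: right_diff_distrib sum_subtractf)
qed

lemma liquid_welfare_optimal:
  assumes "w' \<in> Pmod n m E0 fs"
  shows "(\<Sum>i\<in>N. lw_term n v \<rho> B i (sum w' (buyerE E {i}))) \<le> (\<Sum>i\<in>N. lw_term n v \<rho> B i (x i))"
proof (rule liquid_welfare_le[where y = "\<lambda>i. sum w' (buyerE E {i})"])
  fix H assume "H \<subseteq> N"
  then have "(\<Sum>i\<in>H. sum w' (buyerE E {i})) = sum w' (buyerE E H)"
    by (intro sum_buyerE) (meson finite_atLeastAtMost finite_subset)
  also have "\<dots> \<le> g H"
    using assms unfolding Pmod_eq_polymatroid
    by (rule polymatroid_sum_le) (auto simp: buyerE_def)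
  finally show "(\<Sum>i\<in>H. sum w' (buyerE E {i})) \<le> g H" .
qed

end

theorem proposition2p1:
  fixes n m :: nat
    and E0 :: "(nat \<times> nat) set"
    and fs :: "nat \<Rightarrow> (nat \<times> nat) set \<Rightarrow> real"
    and v B \<rho> x :: "nat \<Rightarrow> real"
  assumes E0_sub: "E0 \<subseteq> {1..n} \<times> {1..m}"
    and f_empty: "\<forall>j\<in>{1..m}. fs j {} = 0"
    and f_nonneg: "\<forall>j\<in>{1..m}. \<forall>F. F \<subseteq> sellerE E0 j \<longrightarrow> 0 \<le> fs j F"
    and f_mono: "\<forall>j\<in>{1..m}. \<forall>F G. F \<subseteq> G \<and> G \<subseteq> sellerE E0 j \<longrightarrow> fs j F \<le> fs j G"
    and f_submod: "\<forall>j\<in>{1..m}. \<forall>F G. F \<subseteq> sellerE E0 j \<and> G \<subseteq> sellerE E0 j \<longrightarrow>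
                      fs j (F \<union> G) + fs j (F \<inter> G) \<le> fs j F + fs j G"
    and v_pos: "\<forall>i\<in>{1..n}. 0 < v i"
    and B_nonneg: "\<forall>i\<in>{1..n}. 0 \<le> B i"
    and \<rho>_pos: "\<forall>j\<in>{1..m}. 0 < \<rho> j"
    and x_rec: "\<forall>i\<in>{1..n+m}. x i = xrhs n m E0 fs v \<rho> B x i"
  shows "(\<exists>w\<in>Pmod n m E0 fs.
            (\<forall>i\<in>{1..n+m}. sum w (buyerE (Emod n m E0) {i}) = x i) \<and>
            (\<Sum>i\<in>{1..n+m}. lw_term n v \<rho> B i (x i)) =
              (\<Sum>i\<in>{1..n+m}. lw_term n v \<rho> B i (sum w (buyerE (Emod n m E0) {i}))) \<and>
            (\<forall>w'\<in>Pmod n m E0 fs.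
               (\<Sum>i\<in>{1..n+m}. lw_term n v \<rho> B i (sum w' (buyerE (Emod n m E0) {i})))
               \<le> (\<Sum>i\<in>{1..n+m}. lw_term n v \<rho> B i (x i))))
         \<and> sum x {1..n+m} = fmod n m E0 fs (buyerE (Emod n m E0) {1..n+m})"
proof -
  have "polymatroid_fun (sellerE E0 j) (fs j)" if "j \<in> {1..m}" for j
    using that f_empty f_mono f_submod by (intro polymatroid_funI) auto
  then interpret greedy_allocation n m E0 fs v B \<rho> x
    using E0_sub v_pos B_nonneg \<rho>_pos x_rec by unfold_locales auto
  obtain w where w: "w \<in> Pmod n m E0 fs" and fibres: "\<forall>i\<in>N. sum w (buyerE E {i}) = x i"
    using allocation_realizable by blast
  have "(\<Sum>i\<in>N. lw_term n v \<rho> B i (x i)) = (\<Sum>i\<in>N. lw_term n v \<rho> B i (sum w (buyerE E {i})))"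
    using fibres by simp
  then show ?thesis
    using w fibres liquid_welfare_optimal sum_x_eq_supply by blast
qed

end
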